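(* Let $K$ be a field and let $f\colon\mathbb Z^k\to K$ be the characteristic function of a half-space in $\mathbb Z^k$. Then $f$ is a hypergeometric term on $\mathbb Z^k$; in fact, for every $\vec w\in\mathbb Z^k$, $f=f^{\vec w}$ almost everywhere.
   Context: $f^{\vec w}(\vec z)=f(\vec z+\vec w)$. A half-space is $\{\vec z\in\mathbb Z^k:\vec v\cdot\vec z>n\}$ with $\vec v\in\mathbb Z^k$, $n\in\mathbb Z$. A hyperplane is $\{\vec z\in\mathbb Z^k:\vec v\cdot\vec z=n\}$ with $\vec v\in\mathbb Z^k\setminus\{0\}$, $n\in\mathbb Z$; a set of measure zero is a subset covered by finitely many hyperplanes; two functions are equal almost everywhere if they agree outside a set of measure zero. A hypergeometric term on $\mathbb Z^k$ over $K$ is a function $f\colon\mathbb Z^k\to K$ such that for each $i\in\{1,\dots,k\}$ there are nonzero polynomials $A_i,B_i\in K[\vec z]$ with $A_i(\vec z)f(\vec z)=B_i(\vec z)f(\vec z+\vec e_i)$ for all $\vec z\in\mathbb Z^k$. *)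

theory Defs
  imports "HOL-Analysis.Analysis" "HOL-Library.Poly_Mapping"
begin

text \<open>Polynomials in K[z_1,...,z_k] are finitely supported maps from monomials (exponent
  vectors of type k =>0 nat) to coefficients.\<close>

type_synonym ('k, 'a) mpoly = "('k \<Rightarrow>\<^sub>0 nat) \<Rightarrow>\<^sub>0 'a"

definition mpoly_eval :: "('k::finite, 'a::comm_ring_1) mpoly \<Rightarrow> int ^ 'k \<Rightarrow> 'a" where
  "mpoly_eval p z =
     (\<Sum>m\<in>Poly_Mapping.keys p. Poly_Mapping.lookup p m * (\<Prod>i\<in>UNIV. (of_int (z $ i)) ^ Poly_Mapping.lookup (m :: 'k \<Rightarrow>\<^sub>0 nat) i))"

definition dotZ :: "int ^ 'k::finite \<Rightarrow> int ^ 'k \<Rightarrow> int" where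
  "dotZ v z = (\<Sum>i\<in>UNIV. v $ i * z $ i)"

definition unitZ :: "'k::finite \<Rightarrow> int ^ 'k" where
  "unitZ i = (\<chi> j. if j = i then 1 else 0)"

definition shiftf :: "(int ^ 'k::finite \<Rightarrow> 'a) \<Rightarrow> int ^ 'k \<Rightarrow> int ^ 'k \<Rightarrow> 'a" where
  "shiftf f w = (\<lambda>z. f (z + w))"

definition half_space :: "int ^ 'k::finite \<Rightarrow> int \<Rightarrow> (int ^ 'k) set" where
  "half_space v n = {z. dotZ v z > n}"

definition hyperplaneZ :: "int ^ 'k::finite \<Rightarrow> int \<Rightarrow> (int ^ 'k) set" where
  "hyperplaneZ v n = {z. dotZ v z = n}"

definition measure_zero :: "(int ^ 'k::finite) set \<Rightarrow> bool" where
  "measure_zero S \<longleftrightarrow> (\<exists>F. finite F \<and> (\<forall>(v, n)\<in>F. v \<noteq> 0) \<and>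
       S \<subseteq> (\<Union>(v, n)\<in>F. hyperplaneZ v n))"

definition ae_eq :: "(int ^ 'k::finite \<Rightarrow> 'a) \<Rightarrow> (int ^ 'k \<Rightarrow> 'a) \<Rightarrow> bool" where
  "ae_eq f g \<longleftrightarrow> measure_zero {z. f z \<noteq> g z}"

definition hypergeometric_term :: "(int ^ 'k::finite \<Rightarrow> 'a::field) \<Rightarrow> bool" where
  "hypergeometric_term f \<longleftrightarrow>
     (\<forall>i. \<exists>A B :: ('k, 'a) mpoly. A \<noteq> 0 \<and> B \<noteq> 0 \<and>
        (\<forall>z. mpoly_eval A z * f z = mpoly_eval B z * f (z + unitZ i)))"

end

theory Submission
  imports Defs "HOL-Computational_Algebra.Primes"
begin

text \<open>The indicator of the half-space \<open>v \<bullet> z > n\<close> changes under the shift by \<open>w\<close> only where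
  \<open>v \<bullet> z\<close> lies in the window \<open>(n - |v \<bullet> w|, n + |v \<bullet> w|]\<close>, i.e. on finitely many parallel
  hyperplanes; this gives the almost-everywhere statement. For the hypergeometric relations it
  suffices to find, for each coordinate shift, a nonzero polynomial \<open>P\<close> vanishing on this window,
  and take \<open>A = B = P\<close>. In characteristic zero \<open>P = \<Prod>m. (v \<bullet> z - m)\<close> works, and it is nonzero
  because \<open>v \<bullet> z\<close> also takes values outside the window. In characteristic \<open>p > 0\<close>,
  \<open>P = z\<^sub>i\<^sup>p - z\<^sub>i\<close> vanishes on all of \<open>\<int>\<^sup>k\<close> by Fermat's little theorem.\<close>

lemma dotZ_add: "dotZ v (a + b) = dotZ v a + dotZ v b"
  by (simp add: dotZ_def distrib_left sum.distrib)

lemma dotZ_scale: "dotZ v (t *s z) = t * dotZ v z"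
  by (simp add: dotZ_def sum_distrib_left mult.left_commute)

lemma dotZ_unitZ: "dotZ v (unitZ i) = v $ i"
  by (simp add: dotZ_def unitZ_def if_distrib cong: if_cong)

lemma dotZ_zero_left [simp]: "dotZ 0 z = 0"
  by (simp add: dotZ_def)

lemma ex_dotZ_notin:
  assumes "finite R" and "v \<noteq> 0 \<or> R = {}"
  shows "\<exists>z. dotZ v z \<notin> R"
proof (cases "R = {}")
  case False
  with assms obtain j where "v $ j \<noteq> 0"
    by (auto simp: vec_eq_iff)
  then have "inj (\<lambda>t. dotZ v (t *s unitZ j))"
    by (auto intro: injI simp: dotZ_scale dotZ_unitZ)
  then have "infinite (range (\<lambda>t. dotZ v (t *s unitZ j)))"
    by (metis finite_imageD infinite_UNIV_int)
  then have "\<not> range (\<lambda>t. dotZ v (t *s unitZ j)) \<subseteq> R"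
    using assms(1) finite_subset by blast
  then show ?thesis
    by blast
qed simp

lemma indicator_half_space_shift_neq:
  assumes "(indicator (half_space v n) z :: 'a::zero_neq_one) \<noteq> indicator (half_space v n) (z + w)"
  shows "dotZ v z \<in> {n - \<bar>dotZ v w\<bar><..n + \<bar>dotZ v w\<bar>}"
  using assms by (cases "dotZ v w \<ge> 0")
    (auto simp: half_space_def indicator_def dotZ_add of_bool_eq_iff)

lemma measure_zero_subset: "S \<subseteq> T \<Longrightarrow> measure_zero T \<Longrightarrow> measure_zero S"
  unfolding measure_zero_def by blast

lemma measure_zero_dotZ_in:
  assumes "finite R" and "v \<noteq> 0 \<or> R = {}"
  shows "measure_zero {z. dotZ v z \<in> R}"
  unfolding measure_zero_def
  using assms by (intro exI[of _ "Pair v ` R"]) (auto simp: hyperplaneZ_def)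

lemma ae_eq_shift_indicator_half_space:
  "ae_eq (indicator (half_space v n) :: _ \<Rightarrow> 'a::zero_neq_one)
     (shiftf (indicator (half_space v n)) w)"
  unfolding ae_eq_def shiftf_def
proof (rule measure_zero_subset)
  show "measure_zero {z. dotZ v z \<in> {n - \<bar>dotZ v w\<bar><..n + \<bar>dotZ v w\<bar>}}"
    by (rule measure_zero_dotZ_in) auto
qed (use indicator_half_space_shift_neq in blast)

definition mpoly_monom_eval :: "('k::finite \<Rightarrow>\<^sub>0 nat) \<Rightarrow> int ^ 'k \<Rightarrow> 'a::comm_ring_1" where
  "mpoly_monom_eval m z = (\<Prod>i\<in>UNIV. of_int (z $ i) ^ Poly_Mapping.lookup m i)"

lemma mpoly_monom_eval_add:
  "mpoly_monom_eval (a + b) z = mpoly_monom_eval a z * mpoly_monom_eval b z"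
  by (simp add: mpoly_monom_eval_def lookup_add power_add prod.distrib)

lemma mpoly_monom_eval_single:
  "mpoly_monom_eval (Poly_Mapping.single j k) z = of_int (z $ j) ^ k"
  by (simp add: mpoly_monom_eval_def lookup_single when_def if_distrib cong: if_cong)

lemma mpoly_eval_superset:
  assumes "finite S" "Poly_Mapping.keys p \<subseteq> S"
  shows "mpoly_eval p z = (\<Sum>m\<in>S. Poly_Mapping.lookup p m * mpoly_monom_eval m z)"
  unfolding mpoly_eval_def mpoly_monom_eval_def
  by (rule sum.mono_neutral_left) (use assms in \<open>auto simp: in_keys_iff\<close>)

lemma mpoly_eval_zero [simp]: "mpoly_eval 0 z = 0"
  by (simp add: mpoly_eval_def)

lemma mpoly_eval_single: "mpoly_eval (Poly_Mapping.single m c) z = c * mpoly_monom_eval m z"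
  by (simp add: mpoly_eval_def mpoly_monom_eval_def)

lemma mpoly_eval_one [simp]: "mpoly_eval 1 z = 1"
  using mpoly_eval_single[of 0 1 z] by (simp add: mpoly_monom_eval_def)

lemma mpoly_eval_add: "mpoly_eval (p + q) z = mpoly_eval p z + mpoly_eval q z"
proof -
  let ?S = "Poly_Mapping.keys p \<union> Poly_Mapping.keys q"
  have "mpoly_eval (p + q) z = (\<Sum>m\<in>?S. Poly_Mapping.lookup (p + q) m * mpoly_monom_eval m z)"
    by (rule mpoly_eval_superset) (use keys_add[of p q] in auto)
  also have "\<dots> = mpoly_eval p z + mpoly_eval q z"
    by (simp add: lookup_add distrib_right sum.distrib mpoly_eval_superset[of ?S])
  finally show ?thesis .
qed

lemma mpoly_eval_diff: "mpoly_eval (p - q) z = mpoly_eval p z - mpoly_eval q z"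
  using mpoly_eval_add[of "p - q" q z] by simp

lemma poly_mapping_add_single_induct:
  assumes "P 0" and "\<And>p a b. P p \<Longrightarrow> P (p + Poly_Mapping.single a b)"
  shows "P p"
proof (induction p rule: update_induct)
  case (update f a b)
  have "Poly_Mapping.update a b f = f + Poly_Mapping.single a b"
    using update(1) by (intro poly_mapping_eqI)
      (auto simp: lookup_update lookup_add lookup_single in_keys_iff when_def)
  then show ?case
    using assms(2)[OF update(3)] by simp
qed (use assms in simp)

lemma mpoly_eval_single_mult:
  "mpoly_eval (Poly_Mapping.single a b * q) z = b * mpoly_monom_eval a z * mpoly_eval q z"
  by (induction q rule: poly_mapping_add_single_induct)
    (simp_all add: distrib_left mpoly_eval_add mult_single mpoly_eval_single mpoly_monom_eval_add
      ac_simps)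

lemma mpoly_eval_mult: "mpoly_eval (p * q) z = mpoly_eval p z * mpoly_eval q z"
  by (induction p rule: poly_mapping_add_single_induct)
    (simp_all add: distrib_right mpoly_eval_add mpoly_eval_single_mult mpoly_eval_single)

lemma mpoly_eval_sum: "mpoly_eval (\<Sum>x\<in>A. g x) z = (\<Sum>x\<in>A. mpoly_eval (g x) z)"
  by (induction A rule: infinite_finite_induct) (auto simp: mpoly_eval_add)

lemma mpoly_eval_prod:
  "finite A \<Longrightarrow> mpoly_eval (\<Prod>x\<in>A. g x) z = (\<Prod>x\<in>A. mpoly_eval (g x) z)"
  by (induction A rule: finite_induct) (auto simp: mpoly_eval_mult)

lemma of_nat_power_CHAR:
  assumes "prime CHAR('a::comm_semiring_1)"
  shows "(of_nat k :: 'a) ^ CHAR('a) = of_nat k"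
  using freshmans_dream_sum[OF assms refl, of "\<lambda>_. 1" "{..<k}"] by simp

lemma of_int_power_CHAR:
  assumes "prime CHAR('a::comm_ring_1)"
  shows "(of_int x :: 'a) ^ CHAR('a) = of_int x"
proof (cases "x \<ge> 0")
  case True
  then show ?thesis
    using of_nat_power_CHAR[OF assms, of "nat x"] by simp
next
  case False
  then have "(of_int x :: 'a) = - of_nat (nat (- x))"
    by simp
  then show ?thesis
    by (simp add: minus_power_prime_CHAR[OF refl assms] of_nat_power_CHAR[OF assms])
qed

lemma ex_mpoly_vanishing_char_0:
  fixes v :: "int ^ 'k::finite"
  assumes "CHAR('a::field) = 0" and "finite R" and "dotZ v z\<^sub>0 \<notin> R"
  shows "\<exists>Q :: ('k, 'a) mpoly. Q \<noteq> 0 \<and> (\<forall>z. dotZ v z \<in> R \<longrightarrow> mpoly_eval Q z = 0)"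
proof -
  define L :: "('k, 'a) mpoly" where
    "L = (\<Sum>j\<in>UNIV. Poly_Mapping.single (Poly_Mapping.single j 1) (of_int (v $ j)))"
  define Q where "Q = (\<Prod>m\<in>R. L - Poly_Mapping.single 0 (of_int m))"
  have eval_L: "mpoly_eval L z = of_int (dotZ v z)" for z
    by (simp add: L_def mpoly_eval_sum mpoly_eval_single mpoly_monom_eval_single dotZ_def
        del: single_of_int)
  have eval_Q: "mpoly_eval Q z = (\<Prod>m\<in>R. of_int (dotZ v z - m))" for z
    by (simp add: Q_def assms(2) mpoly_eval_prod mpoly_eval_diff eval_L mpoly_eval_single
        mpoly_monom_eval_def del: single_of_int)
  have of_int_eq_0: "(of_int x :: 'a) = 0 \<longleftrightarrow> x = 0" for x
    using of_int_eq_0_iff_char_dvd[of x, where 'a='a] assms(1) by simp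
  have "mpoly_eval Q z\<^sub>0 \<noteq> 0"
    using assms(2,3) by (auto simp: eval_Q of_int_eq_0 simp del: of_int_diff)
  then have "Q \<noteq> 0"
    by auto
  moreover have "mpoly_eval Q z = 0" if "dotZ v z \<in> R" for z
    using that assms(2) by (auto simp: eval_Q prod_zero_iff)
  ultimately show ?thesis
    by blast
qed

lemma ex_mpoly_vanishing_char_pos:
  assumes "CHAR('a::field) \<noteq> 0"
  shows "\<exists>P :: ('k::finite, 'a) mpoly. P \<noteq> 0 \<and> (\<forall>z. mpoly_eval P z = 0)"
proof -
  fix i :: 'k
  define p where "p = CHAR('a)"
  have "prime p"
    unfolding p_def using assms prime_CHAR_semidom by blast
  define P :: "('k, 'a) mpoly" where
    "P = Poly_Mapping.single (Poly_Mapping.single i p) 1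
       - Poly_Mapping.single (Poly_Mapping.single i 1) 1"
  have "Poly_Mapping.single i p \<noteq> Poly_Mapping.single i (1::nat)"
    using \<open>prime p\<close> by (metis lookup_single_eq not_prime_1)
  then have "Poly_Mapping.lookup P (Poly_Mapping.single i p) = 1"
    by (simp add: P_def lookup_minus lookup_single)
  then have "P \<noteq> 0"
    by auto
  moreover have "mpoly_eval P z = 0" for z
    using of_int_power_CHAR[of "z $ i", where 'a='a] \<open>prime p\<close>
    by (simp add: P_def mpoly_eval_diff mpoly_eval_single mpoly_monom_eval_single p_def)
  ultimately show ?thesis
    by blast
qed

lemma ex_mpoly_vanishing_on_level_sets:
  fixes v :: "int ^ 'k::finite"
  assumes "finite R" and "\<exists>z. dotZ v z \<notin> R"
  shows "\<exists>Q :: ('k, 'a::field) mpoly. Q \<noteq> 0 \<and> (\<forall>z. dotZ v z \<in> R \<longrightarrow> mpoly_eval Q z = 0)"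
proof (cases "CHAR('a) = 0")
  case True
  then show ?thesis
    using assms ex_mpoly_vanishing_char_0 by blast
next
  case False
  then show ?thesis
    using ex_mpoly_vanishing_char_pos by blast
qed

lemma hypergeometric_termI_annihilator:
  fixes f :: "int ^ 'k::finite \<Rightarrow> 'a::field"
  assumes "\<And>i. \<exists>P :: ('k, 'a) mpoly.
    P \<noteq> 0 \<and> (\<forall>z. f z \<noteq> f (z + unitZ i) \<longrightarrow> mpoly_eval P z = 0)"
  shows "hypergeometric_term f"
  unfolding hypergeometric_term_def
proof
  fix i
  obtain P :: "('k, 'a) mpoly" where "P \<noteq> 0"
    and "\<forall>z. f z \<noteq> f (z + unitZ i) \<longrightarrow> mpoly_eval P z = 0"
    using assms by blast
  then show "\<exists>A B :: ('k, 'a) mpoly. A \<noteq> 0 \<and> B \<noteq> 0 \<and>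
      (\<forall>z. mpoly_eval A z * f z = mpoly_eval B z * f (z + unitZ i))"
    by (intro exI[of _ P]) (metis mult_zero_left)
qed

lemma hypergeometric_term_indicator_half_space:
  fixes v :: "int ^ 'k::finite"
  shows   "hypergeometric_term (indicator (half_space v n) :: _ \<Rightarrow> 'a::field)"
proof (rule hypergeometric_termI_annihilator)
  fix i
  let ?R = "{n - \<bar>dotZ v (unitZ i)\<bar><..n + \<bar>dotZ v (unitZ i)\<bar>}"
  have "\<exists>z. dotZ v z \<notin> ?R"
    by (rule ex_dotZ_notin) auto
  then obtain P :: "('k, 'a) mpoly" where "P \<noteq> 0"
    and "\<forall>z. dotZ v z \<in> ?R \<longrightarrow> mpoly_eval P z = 0"
    using ex_mpoly_vanishing_on_level_sets[of ?R] by blast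
  then show "\<exists>P :: ('k, 'a) mpoly. P \<noteq> 0 \<and> (\<forall>z. indicator (half_space v n) z
      \<noteq> (indicator (half_space v n) (z + unitZ i) :: 'a) \<longrightarrow> mpoly_eval P z = 0)"
    using indicator_half_space_shift_neq by blast
qed

theorem lemmaB19:
  fixes v :: "int ^ 'k::finite" and n :: int
    and f :: "int ^ 'k \<Rightarrow> 'a::field"
  assumes "f = indicator (half_space v n)"
  shows "hypergeometric_term f \<and> (\<forall>w. ae_eq f (shiftf f w))"
  using assms hypergeometric_term_indicator_half_space ae_eq_shift_indicator_half_space
  by blast

end
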